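(* Let $(L,[\cdot,\cdot],\cdot,\alpha)$ be a multiplicative Hom-post-Lie algebra. Then $(L\otimes L,\alpha\otimes\alpha)$ is a module over $L$ with the actions $x\diamond(y\otimes z)=[\alpha(x),y]\otimes\alpha(z)+\alpha(y)\otimes[\alpha(x),z]$ and $x\bullet(y\otimes z)=(\alpha(x)\cdot y)\otimes\alpha(z)+\alpha(y)\otimes(\alpha(x)\cdot z)$, for $x,y,z\in L$.
   Context: All vector spaces are over a field $\mathbb{K}$ of characteristic $\neq 2$. A Hom-Lie algebra is $(L,[\cdot,\cdot],\alpha)$ with $[\cdot,\cdot]$ bilinear skew-symmetric, $\alpha$ linear, and $[\alpha(x),[y,z]]+[\alpha(y),[z,x]]+[\alpha(z),[x,y]]=0$. A Hom-post-Lie algebra $(L,[\cdot,\cdot],\cdot,\alpha)$ is a Hom-Lie algebra with bilinear $\cdot$ such that $\alpha(z)\cdot[x,y]-[z\cdot x,\alpha(y)]-[\alpha(x),z\cdot y]=0$ and $\alpha(z)\cdot(y\cdot x)-\alpha(y)\cdot(z\cdot x)+(y\cdot z)\cdot\alpha(x)-(z\cdot y)\cdot\alpha(x)+[y,z]\cdot\alpha(x)=0$ for all $x,y,z$; it is multiplicative if $\alpha([x,y])=[\alpha(x),\alpha(y)]$ and $\alpha(x\cdot y)=\alpha(x)\cdot\alpha(y)$. A module over $L$ is a vector space $M$ with linear $\alpha_M$ and bilinear $\diamond,\bullet:L\otimes M\to M$ such that for all $x,y\in L,m\in M$: (i) $\alpha_M(x\diamond m)=\alpha(x)\diamond\alpha_M(m)$,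 $\alpha_M(x\bullet m)=\alpha(x)\bullet\alpha_M(m)$; (ii) $[x,y]\diamond\alpha_M(m)=\alpha(x)\diamond(y\diamond m)-\alpha(y)\diamond(x\diamond m)$; (iii) $(x\cdot y)\diamond\alpha_M(m)=\alpha(x)\bullet(y\diamond m)-\alpha(y)\diamond(x\bullet m)$; (iv) $[x,y]\bullet\alpha_M(m)=\alpha(x)\bullet(y\bullet m)-\alpha(y)\bullet(x\bullet m)-(x\cdot y)\bullet\alpha_M(m)+(y\cdot x)\bullet\alpha_M(m)$. *)

theory Defs
  imports Complex_Main
begin

definition bilinear_map ::
  "('k::field \<Rightarrow> 'a::ab_group_add \<Rightarrow> 'a) \<Rightarrow> ('k \<Rightarrow> 'b::ab_group_add \<Rightarrow> 'b)
   \<Rightarrow> ('k \<Rightarrow> 'c::ab_group_add \<Rightarrow> 'c) \<Rightarrow> ('a \<Rightarrow> 'b \<Rightarrow> 'c) \<Rightarrow> bool" where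
  "bilinear_map s1 s2 s3 f \<longleftrightarrow>
     (\<forall>x. Vector_Spaces.linear s2 s3 (f x)) \<and> (\<forall>y. Vector_Spaces.linear s1 s3 (\<lambda>x. f x y))"

definition hom_lie_algebra ::
  "('k::field \<Rightarrow> 'v::ab_group_add \<Rightarrow> 'v) \<Rightarrow> ('v \<Rightarrow> 'v \<Rightarrow> 'v) \<Rightarrow> ('v \<Rightarrow> 'v) \<Rightarrow> bool" where
  "hom_lie_algebra s br \<alpha> \<longleftrightarrow>
     vector_space s \<and> bilinear_map s s s br \<and> Vector_Spaces.linear s s \<alpha> \<and>
     (\<forall>x y. br x y = - br y x) \<and>
     (\<forall>x y z. br (\<alpha> x) (br y z) + br (\<alpha> y) (br z x) + br (\<alpha> z) (br x y) = 0)"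

definition hom_post_lie_algebra ::
  "('k::field \<Rightarrow> 'v::ab_group_add \<Rightarrow> 'v) \<Rightarrow> ('v \<Rightarrow> 'v \<Rightarrow> 'v) \<Rightarrow> ('v \<Rightarrow> 'v \<Rightarrow> 'v)
   \<Rightarrow> ('v \<Rightarrow> 'v) \<Rightarrow> bool" where
  "hom_post_lie_algebra s br dot \<alpha> \<longleftrightarrow>
     hom_lie_algebra s br \<alpha> \<and> bilinear_map s s s dot \<and>
     (\<forall>x y z. dot (\<alpha> z) (br x y) - br (dot z x) (\<alpha> y) - br (\<alpha> x) (dot z y) = 0) \<and>
     (\<forall>x y z. dot (\<alpha> z) (dot y x) - dot (\<alpha> y) (dot z x) + dot (dot y z) (\<alpha> x)
               - dot (dot z y) (\<alpha> x) + dot (br y z) (\<alpha> x) = 0)"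

definition multiplicative_hom_post_lie_algebra ::
  "('k::field \<Rightarrow> 'v::ab_group_add \<Rightarrow> 'v) \<Rightarrow> ('v \<Rightarrow> 'v \<Rightarrow> 'v) \<Rightarrow> ('v \<Rightarrow> 'v \<Rightarrow> 'v)
   \<Rightarrow> ('v \<Rightarrow> 'v) \<Rightarrow> bool" where
  "multiplicative_hom_post_lie_algebra s br dot \<alpha> \<longleftrightarrow>
     hom_post_lie_algebra s br dot \<alpha> \<and>
     (\<forall>x y. \<alpha> (br x y) = br (\<alpha> x) (\<alpha> y)) \<and>
     (\<forall>x y. \<alpha> (dot x y) = dot (\<alpha> x) (\<alpha> y))"

definition hom_post_lie_module ::
  "('k::field \<Rightarrow> 'v::ab_group_add \<Rightarrow> 'v) \<Rightarrow> ('v \<Rightarrow> 'v \<Rightarrow> 'v) \<Rightarrow> ('v \<Rightarrow> 'v \<Rightarrow> 'v)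
   \<Rightarrow> ('v \<Rightarrow> 'v) \<Rightarrow> ('k \<Rightarrow> 'm::ab_group_add \<Rightarrow> 'm) \<Rightarrow> ('m \<Rightarrow> 'm)
   \<Rightarrow> ('v \<Rightarrow> 'm \<Rightarrow> 'm) \<Rightarrow> ('v \<Rightarrow> 'm \<Rightarrow> 'm) \<Rightarrow> bool" where
  "hom_post_lie_module s br dot \<alpha> sM \<alpha>M dm bt \<longleftrightarrow>
     vector_space sM \<and> Vector_Spaces.linear sM sM \<alpha>M \<and>
     bilinear_map s sM sM dm \<and> bilinear_map s sM sM bt \<and>
     (\<forall>x m. \<alpha>M (dm x m) = dm (\<alpha> x) (\<alpha>M m)) \<and>
     (\<forall>x m. \<alpha>M (bt x m) = bt (\<alpha> x) (\<alpha>M m)) \<and>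
     (\<forall>x y m. dm (br x y) (\<alpha>M m) = dm (\<alpha> x) (dm y m) - dm (\<alpha> y) (dm x m)) \<and>
     (\<forall>x y m. dm (dot x y) (\<alpha>M m) = bt (\<alpha> x) (dm y m) - dm (\<alpha> y) (bt x m)) \<and>
     (\<forall>x y m. bt (br x y) (\<alpha>M m) = bt (\<alpha> x) (bt y m) - bt (\<alpha> y) (bt x m)
                - bt (dot x y) (\<alpha>M m) + bt (dot y x) (\<alpha>M m))"

text \<open>(T, tp) is a tensor product of L with itself: tp is bilinear and has the
  universal property (unique linear factorisation of bilinear maps) with respect
  to the target spaces K and T itself. Together these determine T = L \<otimes> L up to
  unique isomorphism compatible with tp.\<close>
definition is_tensor_square ::
  "('k::field \<Rightarrow> 'v::ab_group_add \<Rightarrow> 'v) \<Rightarrow> ('k \<Rightarrow> 't::ab_group_add \<Rightarrow> 't)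
   \<Rightarrow> ('v \<Rightarrow> 'v \<Rightarrow> 't) \<Rightarrow> bool" where
  "is_tensor_square s sT tp \<longleftrightarrow>
     vector_space sT \<and> bilinear_map s s sT tp \<and>
     (\<forall>f :: 'v \<Rightarrow> 'v \<Rightarrow> 'k. bilinear_map s s (*) f \<longrightarrow>
        (\<exists>!g. Vector_Spaces.linear sT (*) g \<and> (\<forall>y z. g (tp y z) = f y z))) \<and>
     (\<forall>f :: 'v \<Rightarrow> 'v \<Rightarrow> 't. bilinear_map s s sT f \<longrightarrow>
        (\<exists>!g. Vector_Spaces.linear sT sT g \<and> (\<forall>y z. g (tp y z) = f y z)))"

end

theory Submission
  imports Defs
begin

text \<open>L is a module over itself via the bracket and the product: for this action the
  module axioms (ii)--(iv) are the Hom-Jacobi identity and the two Hom-post-Lie axioms,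
  rearranged. More generally, the tensor square of any module M is a module when x acts on
  m \<otimes> n by (\<alpha> x \<diamond> m) \<otimes> \<alpha>M n + \<alpha>M m \<otimes> (\<alpha> x \<diamond> n). Each module axiom for M \<otimes> M is an
  equation between linear maps, so by the universal property it suffices to check it on
  pure tensors; there it follows from the same axiom for M, axiom (i) and multiplicativity
  of \<alpha>, the cross terms cancelling.\<close>

lemma linear_simps:
  assumes "Vector_Spaces.linear s1 s2 f"
  shows "f (a + b) = f a + f b" "f (s1 c a) = s2 c (f a)"
    "f (a - b) = f a - f b" "f (- a) = - f a"
  using assms module_hom.add module_hom.scale module_hom.diff module_hom.neg
  unfolding Vector_Spaces.linear_iff_module_hom by blast+

lemma bilinear_map_simps:
  assumes "bilinear_map s1 s2 s3 f"
  shows "f x (a + b) = f x a + f x b" "f x (s2 c a) = s3 c (f x a)"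
    "f x (a - b) = f x a - f x b" "f x (- a) = - f x a"
    "f (u + v) y = f u y + f v y" "f (s1 c u) y = s3 c (f u y)"
    "f (u - v) y = f u y - f v y" "f (- u) y = - f u y"
  using assms linear_simps[of s2 s3 "f x"] linear_simps[of s1 s3 "\<lambda>u. f u y"]
  unfolding bilinear_map_def by auto

lemma vector_space_linearI:
  assumes "vector_space s1" "vector_space s2"
    and "\<And>a b. f (a + b) = f a + f b" "\<And>c a. f (s1 c a) = s2 c (f a)"
  shows "Vector_Spaces.linear s1 s2 f"
  using assms by (simp add: Vector_Spaces.linear_iff)

lemma bilinear_mapI:
  assumes "vector_space s1" "vector_space s2" "vector_space s3"
    and "\<And>x a b. f x (a + b) = f x a + f x b" "\<And>x c a. f x (s2 c a) = s3 c (f x a)"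
    and "\<And>y u v. f (u + v) y = f u y + f v y" "\<And>y c u. f (s1 c u) y = s3 c (f u y)"
  shows "bilinear_map s1 s2 s3 f"
  unfolding bilinear_map_def using assms by (auto intro: vector_space_linearI)

definition tensor_lift ::
  "('k::field \<Rightarrow> 't::ab_group_add \<Rightarrow> 't) \<Rightarrow> ('m \<Rightarrow> 'm \<Rightarrow> 't) \<Rightarrow> ('m \<Rightarrow> 'm \<Rightarrow> 't) \<Rightarrow> 't \<Rightarrow> 't"
  where "tensor_lift sT tp f = (THE g. Vector_Spaces.linear sT sT g \<and> (\<forall>m n. g (tp m n) = f m n))"

lemma
  assumes "is_tensor_square s sT tp" and "bilinear_map s s sT f"
  shows linear_tensor_lift: "Vector_Spaces.linear sT sT (tensor_lift sT tp f)"
    and tensor_lift_tp: "tensor_lift sT tp f (tp m n) = f m n"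
proof -
  have "\<exists>!g. Vector_Spaces.linear sT sT g \<and> (\<forall>m n. g (tp m n) = f m n)"
    using assms unfolding is_tensor_square_def by blast
  from theI'[OF this] show "Vector_Spaces.linear sT sT (tensor_lift sT tp f)"
    and "tensor_lift sT tp f (tp m n) = f m n"
    unfolding tensor_lift_def by blast+
qed

lemma tensor_square_linear_eqI:
  assumes tensor: "is_tensor_square s sT tp"
    and g: "Vector_Spaces.linear sT sT g" and h: "Vector_Spaces.linear sT sT h"
    and eq: "\<And>m n. g (tp m n) = h (tp m n)"
  shows "g u = h u"
proof -
  have tp: "bilinear_map s s sT tp" and
    unique: "\<And>f. bilinear_map s s sT f \<Longrightarrow> \<exists>!g. Vector_Spaces.linear sT sT g \<and> (\<forall>m n. g (tp m n) = f m n)"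
    using tensor unfolding is_tensor_square_def by blast+
  have "bilinear_map s s sT (\<lambda>m n. h (tp m n))"
    using tp Vector_Spaces.linear_compose[OF _ h, unfolded o_def]
    unfolding bilinear_map_def by blast
  from unique[OF this] g h eq have "g = h" by metis
  then show ?thesis by simp
qed

lemma hom_lie_bracket_left:
  assumes "hom_lie_algebra s br \<alpha>"
  shows "br (br x y) (\<alpha> a) = br (\<alpha> x) (br y a) - br (\<alpha> y) (br x a)"
proof -
  have bilinear: "bilinear_map s s s br" and skew: "\<And>x y. br x y = - br y x"
    and jacobi: "br (\<alpha> x) (br y a) + br (\<alpha> y) (br a x) + br (\<alpha> a) (br x y) = 0"
    using assms unfolding hom_lie_algebra_def by blast+
  have "br (\<alpha> y) (br a x) = - br (\<alpha> y) (br x a)"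
    using skew[of a x] bilinear_map_simps(4)[OF bilinear] by simp
  with jacobi skew[of "\<alpha> a" "br x y"] show ?thesis
    by (simp add: algebra_simps eq_neg_iff_add_eq_0)
qed

lemma hom_post_lie_bracket_dot_left:
  assumes "hom_post_lie_algebra s br dot \<alpha>"
  shows "br (dot x y) (\<alpha> a) = dot (\<alpha> x) (br y a) - br (\<alpha> y) (dot x a)"
proof -
  have "dot (\<alpha> x) (br y a) - br (dot x y) (\<alpha> a) - br (\<alpha> y) (dot x a) = 0"
    using assms unfolding hom_post_lie_algebra_def by blast
  then show ?thesis by (simp add: algebra_simps)
qed

lemma hom_post_lie_dot_bracket_left:
  assumes "hom_post_lie_algebra s br dot \<alpha>"
  shows "dot (br x y) (\<alpha> a) = dot (\<alpha> x) (dot y a) - dot (\<alpha> y) (dot x a)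
           - dot (dot x y) (\<alpha> a) + dot (dot y x) (\<alpha> a)"
proof -
  have "dot (\<alpha> y) (dot x a) - dot (\<alpha> x) (dot y a) + dot (dot x y) (\<alpha> a)
          - dot (dot y x) (\<alpha> a) + dot (br x y) (\<alpha> a) = 0"
    using assms unfolding hom_post_lie_algebra_def by blast
  then show ?thesis by (simp add: algebra_simps eq_neg_iff_add_eq_0)
qed

lemma hom_post_lie_module_adjoint:
  assumes "multiplicative_hom_post_lie_algebra s br dot \<alpha>"
  shows "hom_post_lie_module s br dot \<alpha> s \<alpha> br dot"
proof -
  have post_lie: "hom_post_lie_algebra s br dot \<alpha>"
    using assms unfolding multiplicative_hom_post_lie_algebra_def by blast
  then have lie: "hom_lie_algebra s br \<alpha>"
    unfolding hom_post_lie_algebra_def by blast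
  show ?thesis
    unfolding hom_post_lie_module_def
    using assms lie post_lie hom_lie_bracket_left[OF lie] hom_post_lie_bracket_dot_left[OF post_lie]
      hom_post_lie_dot_bracket_left[OF post_lie]
    unfolding multiplicative_hom_post_lie_algebra_def hom_post_lie_algebra_def hom_lie_algebra_def
    by blast
qed

locale hom_post_lie_module_tensor_square =
  fixes s :: "'k::field \<Rightarrow> 'v::ab_group_add \<Rightarrow> 'v"
    and br dot :: "'v \<Rightarrow> 'v \<Rightarrow> 'v"
    and \<alpha> :: "'v \<Rightarrow> 'v"
    and sM :: "'k \<Rightarrow> 'm::ab_group_add \<Rightarrow> 'm"
    and \<alpha>M :: "'m \<Rightarrow> 'm"
    and dm bt :: "'v \<Rightarrow> 'm \<Rightarrow> 'm"
    and sT :: "'k \<Rightarrow> 't::ab_group_add \<Rightarrow> 't"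
    and tp :: "'m \<Rightarrow> 'm \<Rightarrow> 't"
  assumes algebra: "multiplicative_hom_post_lie_algebra s br dot \<alpha>"
    and module: "hom_post_lie_module s br dot \<alpha> sM \<alpha>M dm bt"
    and tensor: "is_tensor_square sM sT tp"
begin

lemma
  shows vector_space_L: "vector_space s"
    and linear_alpha: "Vector_Spaces.linear s s \<alpha>"
    and alpha_bracket: "\<alpha> (br x y) = br (\<alpha> x) (\<alpha> y)"
    and alpha_dot: "\<alpha> (dot x y) = dot (\<alpha> x) (\<alpha> y)"
  using algebra unfolding multiplicative_hom_post_lie_algebra_def hom_post_lie_algebra_def
    hom_lie_algebra_def by blast+

lemma
  shows vector_space_M: "vector_space sM"
    and linear_alphaM: "Vector_Spaces.linear sM sM \<alpha>M"
    and bilinear_dm: "bilinear_map s sM sM dm"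
    and bilinear_bt: "bilinear_map s sM sM bt"
    and alphaM_dm: "\<alpha>M (dm x m) = dm (\<alpha> x) (\<alpha>M m)"
    and alphaM_bt: "\<alpha>M (bt x m) = bt (\<alpha> x) (\<alpha>M m)"
    and dm_bracket: "dm (br x y) (\<alpha>M m) = dm (\<alpha> x) (dm y m) - dm (\<alpha> y) (dm x m)"
    and dm_dot: "dm (dot x y) (\<alpha>M m) = bt (\<alpha> x) (dm y m) - dm (\<alpha> y) (bt x m)"
    and bt_bracket: "bt (br x y) (\<alpha>M m) = bt (\<alpha> x) (bt y m) - bt (\<alpha> y) (bt x m)
                       - bt (dot x y) (\<alpha>M m) + bt (dot y x) (\<alpha>M m)"
  using module unfolding hom_post_lie_module_def by blast+

lemma
  shows vector_space_T: "vector_space sT"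
    and bilinear_tp: "bilinear_map sM sM sT tp"
  using tensor unfolding is_tensor_square_def by blast+

sublocale T: vector_space sT
  by (rule vector_space_T)

lemmas alpha_simps = linear_simps[OF linear_alpha]
lemmas alphaM_simps = linear_simps[OF linear_alphaM]
lemmas tp_simps = bilinear_map_simps[OF bilinear_tp]

lemma linear_TI:
  assumes "\<And>u v. g (u + v) = g u + g v" "\<And>c u. g (sT c u) = sT c (g u)"
  shows "Vector_Spaces.linear sT sT g"
  using vector_space_T vector_space_T assms by (rule vector_space_linearI)

lemma tensor_eqI:
  assumes "Vector_Spaces.linear sT sT g" "Vector_Spaces.linear sT sT h"
    and "\<And>m n. g (tp m n) = h (tp m n)"
  shows "g = h"
  using tensor_square_linear_eqI[OF tensor assms] by blast

definition tensor_alpha :: "'t \<Rightarrow> 't"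
  where "tensor_alpha = tensor_lift sT tp (\<lambda>m n. tp (\<alpha>M m) (\<alpha>M n))"

definition tensor_action :: "('v \<Rightarrow> 'm \<Rightarrow> 'm) \<Rightarrow> 'v \<Rightarrow> 't \<Rightarrow> 't"
  where "tensor_action act x =
    tensor_lift sT tp (\<lambda>m n. tp (act (\<alpha> x) m) (\<alpha>M n) + tp (\<alpha>M m) (act (\<alpha> x) n))"

lemma bilinear_tensor_alpha_on_pure:
  "bilinear_map sM sM sT (\<lambda>m n. tp (\<alpha>M m) (\<alpha>M n))"
  by (rule bilinear_mapI[OF vector_space_M vector_space_M vector_space_T])
    (simp_all add: alphaM_simps tp_simps)

lemma
  shows linear_tensor_alpha: "Vector_Spaces.linear sT sT tensor_alpha"
    and tensor_alpha_tp: "tensor_alpha (tp m n) = tp (\<alpha>M m) (\<alpha>M n)"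
  unfolding tensor_alpha_def
  using tensor bilinear_tensor_alpha_on_pure by (rule linear_tensor_lift, rule tensor_lift_tp)

lemmas tensor_alpha_simps = linear_simps[OF linear_tensor_alpha]

context
  fixes act :: "'v \<Rightarrow> 'm \<Rightarrow> 'm"
  assumes bilinear_act: "bilinear_map s sM sM act"
begin

lemmas act_simps = bilinear_map_simps[OF bilinear_act]

lemma bilinear_tensor_action_on_pure:
  "bilinear_map sM sM sT (\<lambda>m n. tp (act (\<alpha> x) m) (\<alpha>M n) + tp (\<alpha>M m) (act (\<alpha> x) n))"
  by (rule bilinear_mapI[OF vector_space_M vector_space_M vector_space_T])
    (simp_all add: alphaM_simps tp_simps act_simps T.scale_right_distrib add_ac)

lemma
  shows linear_tensor_action: "Vector_Spaces.linear sT sT (tensor_action act x)"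
    and tensor_action_tp:
      "tensor_action act x (tp m n) = tp (act (\<alpha> x) m) (\<alpha>M n) + tp (\<alpha>M m) (act (\<alpha> x) n)"
  unfolding tensor_action_def
  using tensor bilinear_tensor_action_on_pure by (rule linear_tensor_lift, rule tensor_lift_tp)

lemmas tensor_action_simps = linear_simps[OF linear_tensor_action]

lemma bilinear_tensor_action: "bilinear_map s sT sT (tensor_action act)"
proof -
  have "tensor_action act (x + y) = (\<lambda>u. tensor_action act x u + tensor_action act y u)" for x y
    by (rule tensor_eqI)
      (auto intro!: linear_TI linear_tensor_action
        simp: tensor_action_simps tensor_action_tp alpha_simps act_simps tp_simps
          T.scale_right_distrib add_ac)
  moreover have "tensor_action act (s c x) = (\<lambda>u. sT c (tensor_action act x u))" for c x
    by (rule tensor_eqI)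
      (auto intro!: linear_TI linear_tensor_action
        simp: tensor_action_simps tensor_action_tp alpha_simps act_simps tp_simps
          T.scale_right_distrib mult.commute)
  ultimately show ?thesis
    unfolding bilinear_map_def using linear_tensor_action
    by (auto intro!: vector_space_linearI vector_space_L vector_space_T)
qed

lemma tensor_alpha_tensor_action:
  assumes "\<And>x m. \<alpha>M (act x m) = act (\<alpha> x) (\<alpha>M m)"
  shows "tensor_alpha \<circ> tensor_action act x = tensor_action act (\<alpha> x) \<circ> tensor_alpha"
  using Vector_Spaces.linear_compose[OF linear_tensor_action linear_tensor_alpha]
    Vector_Spaces.linear_compose[OF linear_tensor_alpha linear_tensor_action]
  by (rule tensor_eqI) (simp add: tensor_alpha_tp tensor_action_tp tensor_alpha_simps assms)

end

lemmas tensor_dm_simps = tensor_action_tp[OF bilinear_dm] tensor_action_simps[OF bilinear_dm]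
lemmas tensor_bt_simps = tensor_action_tp[OF bilinear_bt] tensor_action_simps[OF bilinear_bt]

lemma tensor_dm_bracket:
  "tensor_action dm (br x y) \<circ> tensor_alpha =
     (\<lambda>u. tensor_action dm (\<alpha> x) (tensor_action dm y u) - tensor_action dm (\<alpha> y) (tensor_action dm x u))"
  by (rule tensor_eqI)
    (auto intro!: linear_TI simp: tensor_dm_simps tensor_alpha_simps tensor_alpha_tp tp_simps
      alpha_bracket alphaM_dm dm_bracket T.scale_right_diff_distrib algebra_simps)

lemma tensor_dm_dot:
  "tensor_action dm (dot x y) \<circ> tensor_alpha =
     (\<lambda>u. tensor_action bt (\<alpha> x) (tensor_action dm y u) - tensor_action dm (\<alpha> y) (tensor_action bt x u))"
  by (rule tensor_eqI)
    (auto intro!: linear_TI simp: tensor_dm_simps tensor_bt_simps tensor_alpha_simps tensor_alpha_tp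
      tp_simps alpha_dot alphaM_dm alphaM_bt dm_dot T.scale_right_diff_distrib algebra_simps)

lemma tensor_bt_bracket:
  "tensor_action bt (br x y) \<circ> tensor_alpha =
     (\<lambda>u. tensor_action bt (\<alpha> x) (tensor_action bt y u) - tensor_action bt (\<alpha> y) (tensor_action bt x u)
        - tensor_action bt (dot x y) (tensor_alpha u) + tensor_action bt (dot y x) (tensor_alpha u))"
  by (rule tensor_eqI)
    (auto intro!: linear_TI simp: tensor_bt_simps tensor_alpha_simps tensor_alpha_tp
      tp_simps alpha_bracket alpha_dot alphaM_bt bt_bracket T.scale_right_diff_distrib algebra_simps)

theorem tensor_module:
  "hom_post_lie_module s br dot \<alpha> sT tensor_alpha (tensor_action dm) (tensor_action bt)"
  unfolding hom_post_lie_module_def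
  using vector_space_T linear_tensor_alpha
    bilinear_tensor_action[OF bilinear_dm] bilinear_tensor_action[OF bilinear_bt]
    tensor_alpha_tensor_action[OF bilinear_dm alphaM_dm]
    tensor_alpha_tensor_action[OF bilinear_bt alphaM_bt]
    tensor_dm_bracket tensor_dm_dot tensor_bt_bracket
  by (simp add: fun_eq_iff)

end

theorem mainTheorem4:
  fixes s :: "'k::field \<Rightarrow> 'v::ab_group_add \<Rightarrow> 'v"
    and br dot :: "'v \<Rightarrow> 'v \<Rightarrow> 'v"
    and \<alpha> :: "'v \<Rightarrow> 'v"
    and sT :: "'k \<Rightarrow> 't::ab_group_add \<Rightarrow> 't"
    and tp :: "'v \<Rightarrow> 'v \<Rightarrow> 't"
  assumes "(2::'k) \<noteq> 0"
    and "multiplicative_hom_post_lie_algebra s br dot \<alpha>"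
    and "is_tensor_square s sT tp"
  shows "\<exists>\<alpha>T dm bt.
           (\<forall>y z. \<alpha>T (tp y z) = tp (\<alpha> y) (\<alpha> z)) \<and>
           (\<forall>x y z. dm x (tp y z) = tp (br (\<alpha> x) y) (\<alpha> z) + tp (\<alpha> y) (br (\<alpha> x) z)) \<and>
           (\<forall>x y z. bt x (tp y z) = tp (dot (\<alpha> x) y) (\<alpha> z) + tp (\<alpha> y) (dot (\<alpha> x) z)) \<and>
           hom_post_lie_module s br dot \<alpha> sT \<alpha>T dm bt"
proof -
  interpret hom_post_lie_module_tensor_square s br dot \<alpha> s \<alpha> br dot sT tp
    using assms(2) hom_post_lie_module_adjoint[OF assms(2)] assms(3)
    by unfold_locales
  show ?thesis
    using tensor_alpha_tp tensor_dm_simps(1) tensor_bt_simps(1) tensor_module by blast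
qed

end
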